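(* Let $X=[x_1\ \cdots\ x_N]\in\mathbb{R}^{n\times N}$ with $\operatorname{rank}(X)=n$, let $m=\nu_n(X)$, and assume $N\ge s\,m$. For $\Lambda=[\eta_1\ \cdots\ \eta_s]\in\mathbb{R}^{n\times s}$ define $$g(\Lambda)=\min\Big\{\sum_{i=1}^s\|X_{J_i}^\top\eta_i\|_1:\ J_1,\ldots,J_s\subset\mathbb{T}\text{ pairwise disjoint},\ |J_i|\ge m\ \forall i\Big\},$$ $\|\Lambda\|_{2,\mathrm{col}}=\sum_{i=1}^s\|\eta_i\|_2$, and $D=\inf\{g(\Lambda):\|\Lambda\|_{2,\mathrm{col}}=1\}$. Then $$D\ge\gamma_m\ge\min_{I\subset\mathbb{T},\,|I|=m}\lambda_{\min}^{1/2}\big(X_IX_I^\top\big),$$ where $\gamma_m=\inf\{\|X_I^\top\eta\|_1:\eta\in\mathbb{R}^n,\ \|\eta\|_2=1,\ I\subset\mathbb{T},\ |I|\ge m\}$.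
   Context: $\mathbb{T}=\{1,\ldots,N\}$. $X_I$ denotes the submatrix of $X$ formed by the columns indexed by $I$. $\lambda_{\min}(\cdot)$ is the smallest eigenvalue of a symmetric matrix. Genericity index: $\nu_n(X)$ is the smallest integer $m$ such that for every $\mathcal{S}\subset\mathbb{T}$ with $|\mathcal{S}|=m$, $\operatorname{rank}(X_{\mathcal{S}})=n$. *)

theory Defs
  imports "HOL-Analysis.Analysis"
begin

text \<open>The matrix X is given by its columns x_1,...,x_N :: real^'n (index set T = {1..N}).\<close>

definition genericity_index :: "(nat \<Rightarrow> real^'n) \<Rightarrow> nat \<Rightarrow> nat" where
  "genericity_index X N =
     (LEAST m. \<forall>S. S \<subseteq> {1..N} \<and> card S = m \<longrightarrow> dim (X ` S) = CARD('n))"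

definition gram_sub :: "(nat \<Rightarrow> real^'n) \<Rightarrow> nat set \<Rightarrow> real^'n^'n" where
  "gram_sub X I = (\<chi> a b. \<Sum>j\<in>I. (X j $ a) * (X j $ b))"

definition eigenvalues_of :: "real^'n^'n \<Rightarrow> real set" where
  "eigenvalues_of A = {l. \<exists>v. v \<noteq> 0 \<and> A *v v = l *\<^sub>R v}"

definition lambda_min :: "real^'n^'n \<Rightarrow> real" where
  "lambda_min A = Min (eigenvalues_of A)"

definition l1_proj :: "(nat \<Rightarrow> real^'n) \<Rightarrow> nat set \<Rightarrow> real^'n \<Rightarrow> real" where
  "l1_proj X J \<eta> = (\<Sum>j\<in>J. \<bar>X j \<bullet> \<eta>\<bar>)"

definition g_fun :: "(nat \<Rightarrow> real^'n) \<Rightarrow> nat \<Rightarrow> nat \<Rightarrow> nat \<Rightarrow> (nat \<Rightarrow> real^'n) \<Rightarrow> real" where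
  "g_fun X N m s \<eta> = Min {(\<Sum>i=1..s. l1_proj X (J i) (\<eta> i)) | J.
      (\<forall>i\<in>{1..s}. J i \<subseteq> {1..N} \<and> card (J i) \<ge> m) \<and>
      (\<forall>i\<in>{1..s}. \<forall>k\<in>{1..s}. i \<noteq> k \<longrightarrow> J i \<inter> J k = {})}"

definition D_const :: "(nat \<Rightarrow> real^'n) \<Rightarrow> nat \<Rightarrow> nat \<Rightarrow> nat \<Rightarrow> real" where
  "D_const X N m s = Inf {g_fun X N m s \<eta> | \<eta>. (\<Sum>i=1..s. norm (\<eta> i)) = 1}"

definition gamma_m :: "(nat \<Rightarrow> real^'n) \<Rightarrow> nat \<Rightarrow> nat \<Rightarrow> real" where
  "gamma_m X N m = Inf {l1_proj X I \<eta> | \<eta> I. norm \<eta> = 1 \<and> I \<subseteq> {1..N} \<and> card I \<ge> m}"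

end

theory Submission imports Defs begin

text \<open>
  For a unit vector \<eta> and a column set I of size at least m, pick I' \<subseteq> I with |I'| = m.
  Then the l1 norm of X_I^T \<eta> dominates the l2 norm of X_I'^T \<eta>, whose square is the
  quadratic form of X_I' X_I'^T at \<eta> and hence at least its smallest eigenvalue; this gives
  the lower bound on \<gamma>_m. For D, every admissible family of blocks J_1, ..., J_s satisfies
  \<Sum>i \<parallel>X_J_i^T \<eta>_i\<parallel>_1 \<ge> \<gamma>_m \<Sum>i \<parallel>\<eta>_i\<parallel>_2 = \<gamma>_m by homogeneity, and consecutive blocks of
  length m show that admissible families exist.
\<close>

lemma symmetric_matrix_inner_commute:
  fixes A :: "real^'n^'n"
  assumes "transpose A = A"
  shows "(A *v x) \<bullet> y = x \<bullet> (A *v y)"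
proof -
  have "(A *v x) \<bullet> y = (x v* transpose A) \<bullet> y" by simp
  also have "\<dots> = x \<bullet> (transpose A *v y)" by (rule dot_lmul_matrix)
  finally show ?thesis using assms by simp
qed

text \<open>Eigenvectors for distinct eigenvalues are orthogonal, hence independent, so there are at
  most CARD('n) eigenvalues.\<close>
lemma finite_eigenvalues_of_symmetric:
  fixes A :: "real^'n^'n"
  assumes sym: "transpose A = A"
  shows "finite (eigenvalues_of A)"
proof -
  let ?E = "eigenvalues_of A"
  define f where "f l = (SOME v. v \<noteq> 0 \<and> A *v v = l *\<^sub>R v)" for l
  have f: "f l \<noteq> 0 \<and> A *v f l = l *\<^sub>R f l" if "l \<in> ?E" for l
    unfolding f_def by (rule someI_ex) (use that in \<open>simp add: eigenvalues_of_def\<close>)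
  have inj: "inj_on f ?E"
  proof (rule inj_onI)
    fix l k assume l: "l \<in> ?E" and k: "k \<in> ?E" and "f l = f k"
    then have "l *\<^sub>R f l = k *\<^sub>R f l" using f by metis
    then show "l = k" using f[OF l] by simp
  qed
  have "pairwise orthogonal (f ` ?E)"
  proof (rule pairwiseI, clarsimp)
    fix l k assume l: "l \<in> ?E" and k: "k \<in> ?E" and "f l \<noteq> f k"
    then have "l \<noteq> k" by auto
    have "l * (f l \<bullet> f k) = (A *v f l) \<bullet> f k" using f[OF l] by simp
    also have "\<dots> = f l \<bullet> (A *v f k)" by (rule symmetric_matrix_inner_commute[OF sym])
    also have "\<dots> = k * (f l \<bullet> f k)" using f[OF k] by simp
    finally show "orthogonal (f l) (f k)" using \<open>l \<noteq> k\<close> by (simp add: orthogonal_def)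
  qed
  moreover have "0 \<notin> f ` ?E" using f by auto
  ultimately have "finite (f ` ?E)"
    using pairwise_orthogonal_independent finiteI_independent by blast
  then show ?thesis using inj finite_imageD by blast
qed

lemma quadratic_nonneg_imp_linear_coeff_zero:
  fixes a b :: real
  assumes "\<And>t. a * t\<^sup>2 + b * t \<ge> 0"
  shows "b = 0"
proof (rule ccontr)
  assume "b \<noteq> 0"
  define c where "c = \<bar>a\<bar> + 1"
  have "c > 0" unfolding c_def by simp
  have "a * (- b / c)\<^sup>2 + b * (- b / c) = b\<^sup>2 * (a - c) / c\<^sup>2"
    using \<open>c > 0\<close> by (simp add: field_simps power2_eq_square)
  also have "\<dots> < 0"
    using \<open>b \<noteq> 0\<close> \<open>c > 0\<close> by (intro divide_neg_pos mult_pos_neg) (auto simp: c_def)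
  finally show False using assms[of "- b / c"] by linarith
qed

text \<open>First-order optimality: perturbing v0 along the residual r = A v0 - \<mu> v0 changes the
  nonnegative form x \<bullet> A x - \<mu> x \<bullet> x by a quadratic in t with linear coefficient 2 r \<bullet> r.\<close>
lemma symmetric_min_quadratic_form_eigenvector:
  fixes A :: "real^'n^'n"
  assumes sym: "transpose A = A" and "norm v0 = 1"
    and min: "\<And>v. norm v = 1 \<Longrightarrow> v0 \<bullet> (A *v v0) \<le> v \<bullet> (A *v v)"
  shows "A *v v0 = (v0 \<bullet> (A *v v0)) *\<^sub>R v0"
proof -
  define \<mu> where "\<mu> = v0 \<bullet> (A *v v0)"
  define h where "h x = x \<bullet> (A *v x) - \<mu> * (x \<bullet> x)" for x
  have h_nonneg: "h x \<ge> 0" for x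
  proof (cases "x = 0")
    case False
    define u where "u = (1 / norm x) *\<^sub>R x"
    have "\<mu> \<le> u \<bullet> (A *v u)"
      unfolding \<mu>_def using False by (intro min) (simp add: u_def)
    have "(c *\<^sub>R y) \<bullet> (A *v (c *\<^sub>R y)) = c\<^sup>2 * (y \<bullet> (A *v y))" for c y
      by (simp add: matrix_vector_mult_scaleR power2_eq_square)
    from this[of "norm x" u] have "x \<bullet> (A *v x) = (norm x)\<^sup>2 * (u \<bullet> (A *v u))"
      using False by (simp add: u_def)
    moreover have "\<mu> * (norm x)\<^sup>2 \<le> (u \<bullet> (A *v u)) * (norm x)\<^sup>2"
      using \<open>\<mu> \<le> u \<bullet> (A *v u)\<close> by (rule mult_right_mono) simp
    ultimately show ?thesis
      by (simp add: h_def power2_norm_eq_inner mult.commute)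
  qed (simp add: h_def)
  have "h v0 = 0" using \<open>norm v0 = 1\<close> by (simp add: h_def \<mu>_def norm_eq_1)
  define r where "r = A *v v0 - \<mu> *\<^sub>R v0"
  have expand: "h (v0 + t *\<^sub>R r) = h r * t\<^sup>2 + (2 * (r \<bullet> r)) * t" for t
  proof -
    have "v0 \<bullet> (A *v r) = r \<bullet> (A *v v0)"
      using symmetric_matrix_inner_commute[OF sym, of r v0] by (simp add: inner_commute)
    then have "h (v0 + t *\<^sub>R r) = h v0 + t * (2 * (r \<bullet> (A *v v0) - \<mu> * (r \<bullet> v0))) + t\<^sup>2 * h r"
      unfolding h_def
      by (simp add: matrix_vector_right_distrib matrix_vector_mult_scaleR inner_add_left
          inner_add_right algebra_simps power2_eq_square inner_commute)
    also have "r \<bullet> (A *v v0) - \<mu> * (r \<bullet> v0) = r \<bullet> r"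
      by (simp add: r_def inner_diff_right)
    finally show ?thesis using \<open>h v0 = 0\<close> by (simp add: algebra_simps)
  qed
  have "h r * t\<^sup>2 + (2 * (r \<bullet> r)) * t \<ge> 0" for t
    using h_nonneg[of "v0 + t *\<^sub>R r"] by (simp only: expand)
  then have "2 * (r \<bullet> r) = 0" by (rule quadratic_nonneg_imp_linear_coeff_zero)
  then show ?thesis by (simp add: r_def \<mu>_def)
qed

lemma symmetric_eigenvalue_le_quadratic_form:
  fixes A :: "real^'n^'n"
  assumes sym: "transpose A = A"
  obtains \<mu> where "\<mu> \<in> eigenvalues_of A" and "\<And>v. norm v = 1 \<Longrightarrow> \<mu> \<le> v \<bullet> (A *v v)"
proof -
  have "continuous_on (sphere 0 1) (\<lambda>v. v \<bullet> (A *v v))"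
    by (intro continuous_intros linear_continuous_on matrix_vector_mul_linear)
  moreover have "sphere (0::real^'n) 1 \<noteq> {}" by simp
  ultimately obtain v0 where v0: "v0 \<in> sphere 0 1"
    and min: "\<And>v. v \<in> sphere 0 1 \<Longrightarrow> v0 \<bullet> (A *v v0) \<le> v \<bullet> (A *v v)"
    using continuous_attains_inf[OF compact_sphere] by blast
  have "A *v v0 = (v0 \<bullet> (A *v v0)) *\<^sub>R v0"
    using v0 min by (intro symmetric_min_quadratic_form_eigenvector[OF sym]) auto
  moreover have "v0 \<noteq> 0" using v0 by auto
  ultimately have "v0 \<bullet> (A *v v0) \<in> eigenvalues_of A"
    unfolding eigenvalues_of_def by blast
  then show ?thesis using that min by simp
qed

lemma lambda_min_le_quadratic_form:
  fixes A :: "real^'n^'n"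
  assumes "transpose A = A" and "norm v = 1"
  shows "lambda_min A \<le> v \<bullet> (A *v v)"
proof -
  obtain \<mu> where "\<mu> \<in> eigenvalues_of A" and "\<And>v. norm v = 1 \<Longrightarrow> \<mu> \<le> v \<bullet> (A *v v)"
    using symmetric_eigenvalue_le_quadratic_form[OF assms(1)] by blast
  moreover have "lambda_min A \<le> \<mu>"
    unfolding lambda_min_def
    using finite_eigenvalues_of_symmetric[OF assms(1)] \<open>\<mu> \<in> eigenvalues_of A\<close> by (rule Min_le)
  ultimately show ?thesis using assms(2) by fastforce
qed

lemma transpose_gram_sub: "transpose (gram_sub X I) = gram_sub X I"
  by (simp add: transpose_def gram_sub_def vec_eq_iff mult.commute)

lemma inner_gram_sub: "\<eta> \<bullet> (gram_sub X I *v \<eta>) = (\<Sum>j\<in>I. (X j \<bullet> \<eta>)\<^sup>2)"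
proof -
  have "\<eta> \<bullet> (gram_sub X I *v \<eta>)
      = (\<Sum>a\<in>UNIV. \<eta> $ a * (\<Sum>b\<in>UNIV. (\<Sum>j\<in>I. X j $ a * X j $ b) * \<eta> $ b))"
    by (simp add: inner_vec_def matrix_vector_mult_def gram_sub_def)
  also have "\<dots> = (\<Sum>a\<in>UNIV. \<Sum>b\<in>UNIV. \<Sum>j\<in>I. (X j $ a * \<eta> $ a) * (X j $ b * \<eta> $ b))"
    by (simp add: sum_distrib_left sum_distrib_right mult_ac)
  also have "\<dots> = (\<Sum>a\<in>UNIV. \<Sum>j\<in>I. \<Sum>b\<in>UNIV. (X j $ a * \<eta> $ a) * (X j $ b * \<eta> $ b))"
    by (rule sum.cong[OF refl], rule sum.swap)
  also have "\<dots> = (\<Sum>j\<in>I. \<Sum>a\<in>UNIV. \<Sum>b\<in>UNIV. (X j $ a * \<eta> $ a) * (X j $ b * \<eta> $ b))"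
    by (rule sum.swap)
  also have "\<dots> = (\<Sum>j\<in>I. (X j \<bullet> \<eta>)\<^sup>2)"
    by (simp add: inner_vec_def power2_eq_square sum_product)
  finally show ?thesis .
qed

lemma l1_proj_nonneg: "l1_proj X J v \<ge> 0"
  by (simp add: l1_proj_def sum_nonneg)

lemma l1_proj_scaleR: "l1_proj X J (c *\<^sub>R v) = \<bar>c\<bar> * l1_proj X J v"
  by (simp add: l1_proj_def abs_mult sum_distrib_left)

lemma l1_proj_mono: "finite J \<Longrightarrow> I \<subseteq> J \<Longrightarrow> l1_proj X I v \<le> l1_proj X J v"
  unfolding l1_proj_def by (rule sum_mono2) auto

lemma sqrt_lambda_min_gram_sub_le_l1_proj:
  assumes "norm \<eta> = 1"
  shows "sqrt (lambda_min (gram_sub X I)) \<le> l1_proj X I \<eta>"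
proof -
  have "lambda_min (gram_sub X I) \<le> (\<Sum>j\<in>I. (X j \<bullet> \<eta>)\<^sup>2)"
    using lambda_min_le_quadratic_form[OF transpose_gram_sub assms] by (simp add: inner_gram_sub)
  then have "sqrt (lambda_min (gram_sub X I)) \<le> L2_set (\<lambda>j. X j \<bullet> \<eta>) I"
    by (simp add: L2_set_def)
  also have "\<dots> \<le> l1_proj X I \<eta>"
    unfolding l1_proj_def by (rule L2_set_le_sum_abs)
  finally show ?thesis .
qed

lemma gamma_m_le_l1_proj:
  assumes "I \<subseteq> {1..N}" and "card I \<ge> m"
  shows "gamma_m X N m * norm v \<le> l1_proj X I v"
proof (cases "v = 0")
  case False
  define u where "u = (1 / norm v) *\<^sub>R v"
  have "norm u = 1" using False by (simp add: u_def)
  have "bdd_below {l1_proj X I \<eta> | \<eta> I. norm \<eta> = 1 \<and> I \<subseteq> {1..N} \<and> card I \<ge> m}"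
    using l1_proj_nonneg by (intro bdd_belowI[of _ 0]) auto
  then have "gamma_m X N m \<le> l1_proj X I u"
    unfolding gamma_m_def using \<open>norm u = 1\<close> assms by (intro cInf_lower) auto
  moreover have "l1_proj X I v = norm v * l1_proj X I u"
    using False by (simp add: u_def l1_proj_scaleR)
  ultimately show ?thesis by (simp add: mult_left_mono mult.commute)
qed (simp add: l1_proj_def)

lemma Min_sqrt_lambda_min_le_gamma_m:
  fixes X :: "nat \<Rightarrow> real^'n"
  assumes "m \<le> N"
  shows "Min {sqrt (lambda_min (gram_sub X I)) | I. I \<subseteq> {1..N} \<and> card I = m} \<le> gamma_m X N m"
    (is "Min ?M \<le> _")
proof -
  have "finite ?M"
    by (rule finite_subset[of _ "(\<lambda>I. sqrt (lambda_min (gram_sub X I))) ` Pow {1..N}"]) auto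
  have "Min ?M \<le> l1_proj X I \<eta>" if "norm \<eta> = 1" "I \<subseteq> {1..N}" "card I \<ge> m" for \<eta> I
  proof -
    obtain I' where I': "I' \<subseteq> I" "card I' = m"
      using obtain_subset_with_card_n[OF \<open>card I \<ge> m\<close>] by blast
    have "finite I" using \<open>I \<subseteq> {1..N}\<close> finite_subset by blast
    have "Min ?M \<le> sqrt (lambda_min (gram_sub X I'))"
      using \<open>finite ?M\<close> I' \<open>I \<subseteq> {1..N}\<close> by (intro Min_le) auto
    also have "\<dots> \<le> l1_proj X I' \<eta>" by (rule sqrt_lambda_min_gram_sub_le_l1_proj[OF \<open>norm \<eta> = 1\<close>])
    also have "\<dots> \<le> l1_proj X I \<eta>" by (rule l1_proj_mono[OF \<open>finite I\<close> \<open>I' \<subseteq> I\<close>])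
    finally show ?thesis .
  qed
  moreover obtain e :: "real^'n" where "norm e = 1"
    using vector_choose_size[of 1] by auto
  then have "l1_proj X {1..N} e \<in> {l1_proj X I \<eta> | \<eta> I. norm \<eta> = 1 \<and> I \<subseteq> {1..N} \<and> card I \<ge> m}"
    using assms by force
  ultimately show ?thesis unfolding gamma_m_def by (intro cInf_greatest) blast+
qed

lemma disjoint_blocks_exist:
  assumes "s * m \<le> N"
  obtains J :: "nat \<Rightarrow> nat set" where
    "\<forall>i\<in>{1..s}. J i \<subseteq> {1..N} \<and> card (J i) \<ge> m"
    "\<forall>i\<in>{1..s}. \<forall>k\<in>{1..s}. i \<noteq> k \<longrightarrow> J i \<inter> J k = {}"
proof -
  define J where "J i = {(i - 1) * m <.. i * m}" for i
  have blocks: "\<forall>i\<in>{1..s}. J i \<subseteq> {1..N} \<and> card (J i) \<ge> m"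
  proof
    fix i assume "i \<in> {1..s}"
    then have "i * m \<le> s * m" by (intro mult_le_mono1) simp
    then have "i * m \<le> N" using assms by linarith
    moreover have "card (J i) = m" using \<open>i \<in> {1..s}\<close> by (cases i) (auto simp: J_def)
    ultimately show "J i \<subseteq> {1..N} \<and> card (J i) \<ge> m" by (auto simp: J_def)
  qed
  have "J i \<inter> J k = {}" if "i < k" for i k
  proof -
    have "i * m \<le> (k - 1) * m" using that by (intro mult_le_mono1) simp
    then show ?thesis by (auto simp: J_def)
  qed
  then have "\<forall>i\<in>{1..s}. \<forall>k\<in>{1..s}. i \<noteq> k \<longrightarrow> J i \<inter> J k = {}"
    by (metis inf_commute nat_neq_iff)
  with blocks show ?thesis by (rule that)
qed

lemma gamma_m_le_g_fun:
  assumes "s * m \<le> N" and norms: "(\<Sum>i=1..s. norm (\<eta> i)) = 1"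
  shows "gamma_m X N m \<le> g_fun X N m s \<eta>"
proof -
  let ?adm = "\<lambda>J. (\<forall>i\<in>{1..s}. J i \<subseteq> {1..N} \<and> card (J i) \<ge> m) \<and>
      (\<forall>i\<in>{1..s}. \<forall>k\<in>{1..s}. i \<noteq> k \<longrightarrow> J i \<inter> J k = {})"
  let ?val = "\<lambda>J. \<Sum>i=1..s. l1_proj X (J i) (\<eta> i)"
  have "{?val J | J. ?adm J} \<subseteq> ?val ` (PiE {1..s} (\<lambda>_. Pow {1..N}))"
  proof
    fix y assume "y \<in> {?val J | J. ?adm J}"
    then obtain J where "y = ?val J" and "?adm J" by blast
    then have "restrict J {1..s} \<in> PiE {1..s} (\<lambda>_. Pow {1..N})" by auto
    moreover have "y = ?val (restrict J {1..s})"
      unfolding \<open>y = ?val J\<close> by (intro sum.cong) auto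
    ultimately show "y \<in> ?val ` (PiE {1..s} (\<lambda>_. Pow {1..N}))" by blast
  qed
  then have "finite {?val J | J. ?adm J}"
    by (rule finite_subset) (intro finite_imageI finite_PiE; simp)
  moreover obtain J0 where "?adm J0"
    using disjoint_blocks_exist[OF assms(1)] by metis
  then have "{?val J | J. ?adm J} \<noteq> {}" by blast
  moreover have "gamma_m X N m \<le> y" if "y \<in> {?val J | J. ?adm J}" for y
  proof -
    from that obtain J where "y = ?val J" and "?adm J" by blast
    have "gamma_m X N m = (\<Sum>i=1..s. gamma_m X N m * norm (\<eta> i))"
      using norms by (simp add: sum_distrib_left[symmetric])
    also have "\<dots> \<le> ?val J"
      using \<open>?adm J\<close> by (intro sum_mono gamma_m_le_l1_proj) auto
    finally show "gamma_m X N m \<le> y" using \<open>y = ?val J\<close> by simp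
  qed
  ultimately show ?thesis unfolding g_fun_def by (rule Min.boundedI)
qed

lemma gamma_m_le_D_const:
  fixes X :: "nat \<Rightarrow> real^'n"
  assumes "s \<ge> 1" and "s * m \<le> N"
  shows "gamma_m X N m \<le> D_const X N m s"
proof -
  obtain e :: "real^'n" where "norm e = 1"
    using vector_choose_size[of 1] by auto
  define \<eta> where "\<eta> i = (if i = 1 then e else 0)" for i :: nat
  have "(\<Sum>i=1..s. norm (\<eta> i)) = (\<Sum>i\<in>{1}. norm (\<eta> i))"
    using assms(1) by (intro sum.mono_neutral_right) (auto simp: \<eta>_def)
  then have "(\<Sum>i=1..s. norm (\<eta> i)) = 1" using \<open>norm e = 1\<close> by (simp add: \<eta>_def)
  then have "{g_fun X N m s \<eta> | \<eta>. (\<Sum>i=1..s. norm (\<eta> i)) = 1} \<noteq> {}" by blast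
  then show ?thesis
    unfolding D_const_def by (rule cInf_greatest) (clarify, rule gamma_m_le_g_fun[OF assms(2)])
qed

theorem lemma8:
  fixes X :: "nat \<Rightarrow> real^'n" and N s m :: nat
  assumes rank: "dim (X ` {1..N}) = CARD('n)"
    and m_def: "m = genericity_index X N"
    and s_pos: "s \<ge> 1"
    and N_ge: "N \<ge> s * m"
  shows "D_const X N m s \<ge> gamma_m X N m \<and>
         gamma_m X N m \<ge> Min {sqrt (lambda_min (gram_sub X I)) | I. I \<subseteq> {1..N} \<and> card I = m}"
proof
  show "D_const X N m s \<ge> gamma_m X N m"
    using gamma_m_le_D_const[OF s_pos N_ge] .
  have "m \<le> s * m" using mult_le_mono1[OF s_pos] by simp
  then have "m \<le> N" using N_ge by linarith
  then show "gamma_m X N m \<ge> Min {sqrt (lambda_min (gram_sub X I)) | I. I \<subseteq> {1..N} \<and> card I = m}"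
    by (rule Min_sqrt_lambda_min_le_gamma_m)
qed

end
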